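(* Let $\kappa \ge 1$ be an integer and let $J_m$ denote the nilpotent Jordan cell of size $m$ (the $m\times m$ matrix with ones on the superdiagonal and zeros elsewhere). Then both $J_\kappa \oplus J_\kappa \in \mathcal{B}(\mathbb{C}^{2\kappa})$ and $J_{\kappa+1} \oplus J_\kappa \in \mathcal{B}(\mathbb{C}^{2\kappa+1})$ can be written as $MN - NM$ with $M, N$ operators on the respective space satisfying $M^2 = 0 = N^2$. *)

theory Defs
  imports "Jordan_Normal_Form.Jordan_Normal_Form"
begin

end

(* For A of size n x m and B of size m x n, the block matrices M = [0 A; 0 0] and
   N = [0 0; B 0] square to zero and MN - NM = AB \<oplus> (-BA). It therefore suffices to
   factor J_n = AB with BA = -J_m, which is possible when m \<le> n \<le> m + 1: take A the
   diagonal n x m matrix with entries (-1)^i and B the m x n matrix with (-1)^i at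
   position (i, i+1). The alternating signs give (AB)(i, i+1) = (-1)^i (-1)^i = 1 but
   (BA)(i, i+1) = (-1)^i (-1)^(i+1) = -1. *)

theory Submission
  imports Defs
begin

definition upper_off_diag :: "'a :: zero mat \<Rightarrow> 'a mat" where
  "upper_off_diag A = four_block_mat (0\<^sub>m (dim_row A) (dim_row A)) A
     (0\<^sub>m (dim_col A) (dim_row A)) (0\<^sub>m (dim_col A) (dim_col A))"

definition lower_off_diag :: "'a :: zero mat \<Rightarrow> 'a mat" where
  "lower_off_diag B = four_block_mat (0\<^sub>m (dim_col B) (dim_col B)) (0\<^sub>m (dim_col B) (dim_row B))
     B (0\<^sub>m (dim_row B) (dim_row B))"

lemma upper_off_diag_carrier_mat:
  "A \<in> carrier_mat n m \<Longrightarrow> upper_off_diag A \<in> carrier_mat (n + m) (n + m)"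
  unfolding upper_off_diag_def by auto

lemma lower_off_diag_carrier_mat:
  "B \<in> carrier_mat m n \<Longrightarrow> lower_off_diag B \<in> carrier_mat (n + m) (n + m)"
  unfolding lower_off_diag_def by auto

lemma upper_off_diag_square:
  assumes "A \<in> carrier_mat n m"
  shows "upper_off_diag A * upper_off_diag (A :: 'a :: semiring_0 mat) = 0\<^sub>m (n + m) (n + m)"
  unfolding upper_off_diag_def using assms
  by (subst mult_four_block_mat[of _ n n _ m _ m _ _ n _ m]) auto

lemma lower_off_diag_square:
  assumes "B \<in> carrier_mat m n"
  shows "lower_off_diag B * lower_off_diag (B :: 'a :: semiring_0 mat) = 0\<^sub>m (n + m) (n + m)"
  unfolding lower_off_diag_def using assms
  by (subst mult_four_block_mat[of _ n n _ m _ m _ _ n _ m]) auto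

lemma diag_block_mat_pair:
  "diag_block_mat [A, B] = four_block_mat A (0\<^sub>m (dim_row A) (dim_col B)) (0\<^sub>m (dim_row B) (dim_col A)) B"
  by (simp only: diag_block_mat.simps(2)[of A "[B]"] diag_block_mat_singleton Let_def)

lemma commutator_off_diag:
  assumes A: "A \<in> carrier_mat n m" and B: "B \<in> carrier_mat m n"
  shows "upper_off_diag A * lower_off_diag B - lower_off_diag B * upper_off_diag (A :: 'a :: ring mat)
    = diag_block_mat [A * B, - (B * A)]"
proof -
  have "upper_off_diag A * lower_off_diag B
      = four_block_mat (A * B) (0\<^sub>m n m) (0\<^sub>m m n) (0\<^sub>m m m)"
    unfolding upper_off_diag_def lower_off_diag_def using A B
    by (subst mult_four_block_mat[of _ n n _ m _ m _ _ n _ m]) auto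
  moreover have "lower_off_diag B * upper_off_diag A
      = four_block_mat (0\<^sub>m n n) (0\<^sub>m n m) (0\<^sub>m m n) (B * A)"
    unfolding upper_off_diag_def lower_off_diag_def using A B
    by (subst mult_four_block_mat[of _ n n _ m _ m _ _ n _ m]) auto
  ultimately show ?thesis
    using A B by (intro eq_matI) (auto simp: diag_block_mat_pair)
qed

definition alternating_diag :: "nat \<Rightarrow> nat \<Rightarrow> 'a :: ring_1 mat" where
  "alternating_diag n m = mat n m (\<lambda>(i, j). if i = j then (-1) ^ i else 0)"

definition alternating_shift :: "nat \<Rightarrow> nat \<Rightarrow> 'a :: ring_1 mat" where
  "alternating_shift m n = mat m n (\<lambda>(i, j). if j = Suc i then (-1) ^ i else 0)"

lemma alternating_diag_carrier_mat [simp]: "alternating_diag n m \<in> carrier_mat n m"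
  by (simp add: alternating_diag_def)

lemma alternating_shift_carrier_mat [simp]: "alternating_shift m n \<in> carrier_mat m n"
  by (simp add: alternating_shift_def)

lemma alternating_diag_mult_shift:
  assumes "n \<le> Suc m"
  shows "alternating_diag n m * alternating_shift m n = (jordan_block n 0 :: 'a :: ring_1 mat)"
proof (rule eq_matI)
  fix i j assume ij: "i < dim_row (jordan_block n (0::'a))" "j < dim_col (jordan_block n (0::'a))"
  then have "(alternating_diag n m * alternating_shift m n) $$ (i, j)
      = (\<Sum>l<m. (if i = l then (-1) ^ i else 0) * (if j = Suc l then (-1) ^ l else 0) :: 'a)"
    by (simp add: alternating_diag_def alternating_shift_def scalar_prod_def atLeast0LessThan)
  also have "\<dots> = (if j = Suc i \<and> i < m then 1 else 0)"
    by (simp add: if_distrib[of "\<lambda>x. x * y" for y] flip: power_add cong: if_cong)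
  also have "\<dots> = jordan_block n 0 $$ (i, j)"
    using ij assms by auto
  finally show "(alternating_diag n m * alternating_shift m n) $$ (i, j) = jordan_block n (0::'a) $$ (i, j)" .
qed (simp_all add: alternating_diag_def alternating_shift_def)

lemma alternating_shift_mult_diag:
  assumes "m \<le> n"
  shows "alternating_shift m n * alternating_diag n m = - (jordan_block m 0 :: 'a :: ring_1 mat)"
proof (rule eq_matI)
  fix i j assume ij: "i < dim_row (- jordan_block m (0::'a))" "j < dim_col (- jordan_block m (0::'a))"
  then have "(alternating_shift m n * alternating_diag n m) $$ (i, j)
      = (\<Sum>l<n. (if l = Suc i then (-1) ^ i else 0) * (if l = j then (-1) ^ l else 0) :: 'a)"
    by (simp add: alternating_diag_def alternating_shift_def scalar_prod_def atLeast0LessThan)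
  also have "\<dots> = (if j = Suc i \<and> j < n then -1 else 0)"
    by (simp add: if_distrib[of "\<lambda>x. x * y" for y] flip: power_add cong: if_cong)
  also have "\<dots> = (- jordan_block m 0) $$ (i, j)"
    using ij assms by auto
  finally show "(alternating_shift m n * alternating_diag n m) $$ (i, j) = (- jordan_block m (0::'a)) $$ (i, j)" .
qed (simp_all add: alternating_diag_def alternating_shift_def)

lemma jordan_block_sum_square_zero_commutator:
  assumes "m \<le> n" "n \<le> Suc m"
  shows "\<exists>M N :: 'a :: ring_1 mat.
    M \<in> carrier_mat (n + m) (n + m) \<and> N \<in> carrier_mat (n + m) (n + m) \<and>
    M * M = 0\<^sub>m (n + m) (n + m) \<and> N * N = 0\<^sub>m (n + m) (n + m) \<and>
    diag_block_mat [jordan_block n 0, jordan_block m 0] = M * N - N * M"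
proof (intro exI conjI)
  let ?A = "alternating_diag n m :: 'a mat" and ?B = "alternating_shift m n :: 'a mat"
  show "upper_off_diag ?A \<in> carrier_mat (n + m) (n + m)" "lower_off_diag ?B \<in> carrier_mat (n + m) (n + m)"
    by (simp_all add: upper_off_diag_carrier_mat lower_off_diag_carrier_mat)
  show "upper_off_diag ?A * upper_off_diag ?A = 0\<^sub>m (n + m) (n + m)"
    "lower_off_diag ?B * lower_off_diag ?B = 0\<^sub>m (n + m) (n + m)"
    by (simp_all add: upper_off_diag_square lower_off_diag_square)
  show "diag_block_mat [jordan_block n 0, jordan_block m 0]
      = upper_off_diag ?A * lower_off_diag ?B - lower_off_diag ?B * upper_off_diag ?A"
    using assms
    by (simp add: commutator_off_diag[of ?A n m ?B] alternating_diag_mult_shift alternating_shift_mult_diag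
        del: diag_block_mat.simps)
qed

theorem proposition3p13:
  fixes \<kappa> :: nat
  assumes "\<kappa> \<ge> 1"
  shows "(\<exists>M N :: complex mat.
            M \<in> carrier_mat (2*\<kappa>) (2*\<kappa>) \<and> N \<in> carrier_mat (2*\<kappa>) (2*\<kappa>) \<and>
            M * M = 0\<^sub>m (2*\<kappa>) (2*\<kappa>) \<and> N * N = 0\<^sub>m (2*\<kappa>) (2*\<kappa>) \<and>
            diag_block_mat [jordan_block \<kappa> 0, jordan_block \<kappa> 0] = M * N - N * M)
       \<and> (\<exists>M N :: complex mat.
            M \<in> carrier_mat (2*\<kappa>+1) (2*\<kappa>+1) \<and> N \<in> carrier_mat (2*\<kappa>+1) (2*\<kappa>+1) \<and>
            M * M = 0\<^sub>m (2*\<kappa>+1) (2*\<kappa>+1) \<and> N * N = 0\<^sub>m (2*\<kappa>+1) (2*\<kappa>+1) \<and>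
            diag_block_mat [jordan_block (\<kappa>+1) 0, jordan_block \<kappa> 0] = M * N - N * M)"
  using jordan_block_sum_square_zero_commutator[of \<kappa> \<kappa>]
    jordan_block_sum_square_zero_commutator[of \<kappa> "\<kappa> + 1"]
  by (simp add: mult_2)

end
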